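(* Let $|q|<1$ and $|qa|<|z|$, with parameters such that no denominator vanishes. Then $$f(a,k,z,q)+f(-a,-k,z,q)=2f(a^2,k^2,z^2,q^2).$$
   Context: Notation: $(x;q)_n=(1-x)(1-xq)\cdots(1-xq^{n-1})$, $(x_1,\dots,x_m;q)_n=(x_1;q)_n\cdots(x_m;q)_n$. Define $$f(a,k,z,q):=\sum_{n=1}^{\infty}\frac{(q\sqrt{k},-q\sqrt{k},k,z,k/a;q)_{n}}{(\sqrt{k},-\sqrt{k},qk,qk/z,qa;q)_{n}(1-q^n)}\left(\frac{qa}{z}\right)^{n}.$$ *)

theory Defs
  imports "HOL-Analysis.Analysis"
begin

definition qpoch :: "complex \<Rightarrow> complex \<Rightarrow> nat \<Rightarrow> complex" where
  "qpoch x q n = (\<Prod>j<n. (1 - x * q ^ j))"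

text \<open>The n-th summand (n \<ge> 1) of f(a,k,z,q); sqrt k is the principal square root
  (the summand does not depend on the choice of branch).\<close>
definition fterm :: "complex \<Rightarrow> complex \<Rightarrow> complex \<Rightarrow> complex \<Rightarrow> nat \<Rightarrow> complex" where
  "fterm a k z q n =
     (qpoch (q * csqrt k) q n * qpoch (- q * csqrt k) q n * qpoch k q n * qpoch z q n
        * qpoch (k / a) q n)
     / (qpoch (csqrt k) q n * qpoch (- csqrt k) q n * qpoch (q * k) q n
        * qpoch (q * k / z) q n * qpoch (q * a) q n * (1 - q ^ n))
     * (q * a / z) ^ n"

definition f :: "complex \<Rightarrow> complex \<Rightarrow> complex \<Rightarrow> complex \<Rightarrow> complex" where
  "f a k z q = (\<Sum>n. fterm a k z q (Suc n))"

definition f_denoms_nonzero :: "complex \<Rightarrow> complex \<Rightarrow> complex \<Rightarrow> complex \<Rightarrow> bool" where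
  "f_denoms_nonzero a k z q \<longleftrightarrow> a \<noteq> 0 \<and> z \<noteq> 0 \<and>
     (\<forall>n. qpoch (csqrt k) q n \<noteq> 0 \<and> qpoch (- csqrt k) q n \<noteq> 0 \<and> qpoch (q * k) q n \<noteq> 0
          \<and> qpoch (q * k / z) q n \<noteq> 0 \<and> qpoch (q * a) q n \<noteq> 0)
     \<and> (\<forall>n\<ge>1. 1 - q ^ n \<noteq> 0)"

end

theory Submission
  imports Defs
begin

text \<open>Put \<open>H(w) = f(a,k,w,q) + f(-a,-k,w,q) - 2 f(a\<^sup>2,k\<^sup>2,w\<^sup>2,q\<^sup>2)\<close>. Writing the summands
  as differences of a telescoping sequence gives the contiguity relation
  \<open>f(a,k,w,q) - f(a,k,w/q,q) = q(a-k)w/((w-qa)(w-qk))\<close>, and these right-hand sides satisfy the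
  claimed identity themselves, so \<open>H(w/q) = H(w)\<close>. Hence \<open>H(z) = lim H(z q\<^sup>-\<^sup>m)\<close>, and by
  Tannery's theorem this limit exists and does not depend on \<open>z\<close>. For \<open>w = q\<^sup>-\<^sup>j\<close> the series
  terminate, the contiguity relation holds without any growth condition and \<open>H(1) = 0\<close>, so
  \<open>H\<close> vanishes along \<open>q\<^sup>-\<^sup>j\<close> and the common limit is \<open>0\<close>.\<close>

lemma qpoch_0 [simp]: "qpoch x q 0 = 1"
  by (simp add: qpoch_def)

lemma qpoch_Suc: "qpoch x q (Suc n) = qpoch x q n * (1 - x * q ^ n)"
  by (simp add: qpoch_def)

lemma qpoch_add: "qpoch x q (m + n) = qpoch x q m * qpoch (x * q ^ m) q n"
  by (induction n) (simp_all add: qpoch_Suc power_add mult_ac)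

lemma qpoch_Suc_left: "qpoch x q (Suc n) = (1 - x) * qpoch (x * q) q n"
  using qpoch_add[of x q 1 n] by (simp add: qpoch_def)

lemma qpoch_shift: "qpoch (x * q) q n * (1 - x) = qpoch x q n * (1 - x * q ^ n)"
  by (induction n) (simp_all add: qpoch_Suc mult_ac)

lemma qpoch_shift_nonzero:
  assumes "\<forall>n. qpoch x q n \<noteq> 0"
  shows "qpoch (x * q ^ m) q n \<noteq> 0"
  using assms[rule_format, of "m + n"] by (simp add: qpoch_add)

lemma qpoch_factor_nonzero:
  assumes "\<forall>n. qpoch x q n \<noteq> 0"
  shows "1 - x * q ^ j \<noteq> 0"
  using assms[rule_format, of "Suc j"] by (simp add: qpoch_Suc)

lemma qpoch_eq_0I:
  assumes "j < n" and "x * q ^ j = 1"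
  shows "qpoch x q n = 0"
  using assms unfolding qpoch_def by (intro prod_zero) auto

lemma qpoch_mult_power:
  assumes "z \<noteq> 0"
  shows "qpoch z q n * (y / z) ^ n = y ^ n * (\<Prod>j<n. 1 / z - q ^ j)"
proof -
  have "qpoch z q n = (\<Prod>j<n. z * (1 / z - q ^ j))"
    unfolding qpoch_def using assms by (intro prod.cong) (auto simp: field_simps)
  also have "\<dots> = z ^ n * (\<Prod>j<n. 1 / z - q ^ j)"
    by (simp add: prod.distrib)
  finally show ?thesis
    using assms by (simp add: power_divide field_simps)
qed

lemma sum_power_le_geometric:
  fixes r :: real
  assumes "0 \<le> r" and "r < 1"
  shows "(\<Sum>j<n. r ^ j) \<le> 1 / (1 - r)"
proof -
  have "(\<Sum>j<n. r ^ j) \<le> (\<Sum>j. r ^ j)"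
    by (rule sum_le_suminf) (use assms in \<open>auto intro: summable_geometric\<close>)
  also have "\<dots> = 1 / (1 - r)"
    using suminf_geometric[of r] assms by simp
  finally show ?thesis .
qed

lemma norm_qpoch_le:
  assumes "norm q < 1"
  shows "norm (qpoch x q n) \<le> exp (norm x / (1 - norm q))"
proof -
  have "norm (qpoch x q n) \<le> (\<Prod>j<n. 1 + norm x * norm q ^ j)"
    unfolding qpoch_def prod_norm[symmetric]
    by (intro prod_mono conjI norm_ge_zero order.trans[OF norm_triangle_ineq4])
       (simp add: norm_mult norm_power)
  also have "\<dots> \<le> exp (\<Sum>j<n. norm x * norm q ^ j)"
    by (rule prod_le_exp_sum) simp
  also have "\<dots> \<le> exp (norm x / (1 - norm q))"
    using sum_power_le_geometric[of "norm q" n] assms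
    by (simp add: sum_distrib_left[symmetric] mult_left_mono divide_inverse)
  finally show ?thesis .
qed

lemma norm_prod_sub_power_le:
  fixes u q :: complex
  assumes "norm q < 1" and "0 < \<rho>" and "norm u \<le> \<rho>"
  shows "norm (\<Prod>j<n. u - q ^ j) \<le> \<rho> ^ n * exp (1 / (\<rho> * (1 - norm q)))"
proof -
  have geometric: "(\<Sum>j<n. norm q ^ j / \<rho>) \<le> 1 / (\<rho> * (1 - norm q))"
  proof -
    have "(\<Sum>j<n. norm q ^ j / \<rho>) = (\<Sum>j<n. norm q ^ j) / \<rho>"
      by (simp add: sum_divide_distrib)
    also have "\<dots> \<le> 1 / (1 - norm q) / \<rho>"
      using sum_power_le_geometric[of "norm q" n] assms by (intro divide_right_mono) auto
    finally show ?thesis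
      by (simp add: mult.commute)
  qed
  have "norm (\<Prod>j<n. u - q ^ j) \<le> (\<Prod>j<n. \<rho> * (1 + norm q ^ j / \<rho>))"
    unfolding prod_norm[symmetric] using assms
    by (intro prod_mono conjI norm_ge_zero order.trans[OF norm_triangle_ineq4])
       (simp_all add: distrib_left norm_power)
  also have "\<dots> = \<rho> ^ n * (\<Prod>j<n. 1 + norm q ^ j / \<rho>)"
    by (simp add: prod.distrib)
  also have "\<dots> \<le> \<rho> ^ n * exp (\<Sum>j<n. norm q ^ j / \<rho>)"
    using assms by (intro mult_left_mono prod_le_exp_sum) auto
  also have "\<dots> \<le> \<rho> ^ n * exp (1 / (\<rho> * (1 - norm q)))"
    using geometric assms by (intro mult_left_mono) auto
  finally show ?thesis .
qed

lemma norm_qpoch_mult_power_le: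
  assumes "norm q < 1" and "z \<noteq> 0" and "0 < \<rho>" and "1 / norm z \<le> \<rho>"
  shows "norm (qpoch z q n * (y / z) ^ n) \<le> (norm y * \<rho>) ^ n * exp (1 / (\<rho> * (1 - norm q)))"
proof -
  have "norm (qpoch z q n * (y / z) ^ n) = norm y ^ n * norm (\<Prod>j<n. 1 / z - q ^ j)"
    by (simp add: qpoch_mult_power[OF assms(2)] norm_mult norm_power)
  also have "\<dots> \<le> norm y ^ n * (\<rho> ^ n * exp (1 / (\<rho> * (1 - norm q))))"
    using assms by (intro mult_left_mono norm_prod_sub_power_le) (auto simp: norm_divide)
  finally show ?thesis
    by (simp add: power_mult_distrib mult_ac)
qed

lemma norm_qpoch_ge_half:
  assumes "norm q < 1" and "norm y \<le> (1 - norm q) / 2"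
  shows "1 / 2 \<le> norm (qpoch y q n)"
proof -
  have "norm y \<le> 1"
    using assms(2) norm_ge_zero[of q] by argo
  then have small: "norm y * norm q ^ j \<le> 1" for j
    using assms by (intro mult_le_one) (auto simp: power_le_one)
  have "(\<Sum>j<n. norm y * norm q ^ j) = norm y * (\<Sum>j<n. norm q ^ j)"
    by (simp add: sum_distrib_left)
  also have "\<dots> \<le> (1 - norm q) / 2 * (1 / (1 - norm q))"
    using assms sum_power_le_geometric[of "norm q" n] by (intro mult_mono) (auto intro: sum_nonneg)
  also have "\<dots> = 1 / 2"
    using assms by simp
  finally have "1 / 2 \<le> 1 - (\<Sum>j<n. norm y * norm q ^ j)"
    by simp
  also have "\<dots> \<le> (\<Prod>j<n. 1 - norm y * norm q ^ j)"
    by (rule Weierstrass_prod_ineq) (use small in auto)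
  also have "\<dots> \<le> norm (qpoch y q n)"
    unfolding qpoch_def prod_norm[symmetric] using small
    by (intro prod_mono conjI order.trans[OF _ norm_triangle_ineq2])
       (auto simp: norm_mult norm_power)
  finally show ?thesis .
qed

lemma qpoch_bounded_below:
  assumes "norm q < 1" and "\<forall>n. qpoch x q n \<noteq> 0"
  shows "\<exists>\<delta>>0. \<forall>n. \<delta> \<le> norm (qpoch x q n)"
proof -
  have "(\<lambda>n. norm x * norm q ^ n) \<longlonglongrightarrow> norm x * 0"
    by (intro tendsto_intros) (use assms in auto)
  then have "eventually (\<lambda>n. norm x * norm q ^ n < (1 - norm q) / 2) sequentially"
    by (rule order_tendstoD(2)) (use assms in auto)
  then obtain J where J: "norm x * norm q ^ J < (1 - norm q) / 2"
    by (auto simp: eventually_sequentially)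
  define d where "d = Min ((\<lambda>n. norm (qpoch x q n)) ` {..J})"
  have d: "0 < d" "\<And>n. n \<le> J \<Longrightarrow> d \<le> norm (qpoch x q n)"
    unfolding d_def using assms by (auto simp: Min_gr_iff)
  have "d / 2 \<le> norm (qpoch x q n)" for n
  proof (cases "n \<le> J")
    case True
    then show ?thesis using d by force
  next
    case False
    then obtain m where n: "n = J + m"
      using le_Suc_ex nat_le_linear by blast
    have "1 / 2 \<le> norm (qpoch (x * q ^ J) q m)"
      by (rule norm_qpoch_ge_half) (use assms J in \<open>auto simp: norm_mult norm_power\<close>)
    then have "d * (1 / 2) \<le> norm (qpoch x q J) * norm (qpoch (x * q ^ J) q m)"
      using d by (intro mult_mono) auto
    then show ?thesis
      by (simp add: n qpoch_add norm_mult)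
  qed
  then show ?thesis
    using d by (intro exI[of _ "d / 2"]) auto
qed

definition f_coeff :: "complex \<Rightarrow> complex \<Rightarrow> complex \<Rightarrow> nat \<Rightarrow> complex" where
  "f_coeff a k q n =
     (qpoch (q * csqrt k) q n * qpoch (- q * csqrt k) q n * qpoch k q n * qpoch (k / a) q n)
     / (qpoch (csqrt k) q n * qpoch (- csqrt k) q n * qpoch (q * k) q n * qpoch (q * a) q n
        * (1 - q ^ n))"

definition coeff_denoms_nonzero :: "complex \<Rightarrow> complex \<Rightarrow> complex \<Rightarrow> bool" where
  "coeff_denoms_nonzero a k q \<longleftrightarrow> a \<noteq> 0 \<and>
     (\<forall>n. qpoch (csqrt k) q n \<noteq> 0 \<and> qpoch (- csqrt k) q n \<noteq> 0 \<and> qpoch (q * k) q n \<noteq> 0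
          \<and> qpoch (q * a) q n \<noteq> 0)
     \<and> (\<forall>n\<ge>1. 1 - q ^ n \<noteq> 0)"

lemma f_denoms_nonzero_iff:
  "f_denoms_nonzero a k z q \<longleftrightarrow>
     coeff_denoms_nonzero a k q \<and> z \<noteq> 0 \<and> (\<forall>n. qpoch (q * k / z) q n \<noteq> 0)"
  unfolding f_denoms_nonzero_def coeff_denoms_nonzero_def by blast

lemma fterm_eq_f_coeff:
  "fterm a k z q n = f_coeff a k q n * (qpoch z q n * (q * a / z) ^ n) / qpoch (q * k / z) q n"
  by (simp add: fterm_def f_coeff_def divide_inverse inverse_mult_distrib mult_ac)

lemma norm_one_minus_power_ge:
  fixes q :: complex
  assumes "norm q < 1"
  shows "1 - norm q \<le> norm (1 - q ^ Suc n)"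
proof -
  have "1 - norm q \<le> 1 - norm (q ^ Suc n)"
    using assms by (simp add: norm_mult norm_power mult_right_le_one_le power_le_one)
  also have "\<dots> \<le> norm (1 - q ^ Suc n)"
    by (metis norm_one norm_triangle_ineq2)
  finally show ?thesis .
qed

lemma f_coeff_bounded:
  assumes q: "norm q < 1" and nz: "coeff_denoms_nonzero a k q"
  shows "\<exists>C. \<forall>n. norm (f_coeff a k q (Suc n)) \<le> C"
proof -
  have "\<exists>\<delta>>0. \<forall>n. \<delta> \<le> norm (qpoch (csqrt k) q n) * norm (qpoch (- csqrt k) q n)
                    * norm (qpoch (q * k) q n) * norm (qpoch (q * a) q n)"
  proof -
    obtain \<delta>1 \<delta>2 \<delta>3 \<delta>4 where "\<delta>1 > 0" "\<forall>n. \<delta>1 \<le> norm (qpoch (csqrt k) q n)"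
      and "\<delta>2 > 0" "\<forall>n. \<delta>2 \<le> norm (qpoch (- csqrt k) q n)"
      and "\<delta>3 > 0" "\<forall>n. \<delta>3 \<le> norm (qpoch (q * k) q n)"
      and "\<delta>4 > 0" "\<forall>n. \<delta>4 \<le> norm (qpoch (q * a) q n)"
      using nz qpoch_bounded_below[OF q] unfolding coeff_denoms_nonzero_def by meson
    then show ?thesis
      by (intro exI[of _ "\<delta>1 * \<delta>2 * \<delta>3 * \<delta>4"]) (auto intro!: mult_mono)
  qed
  then obtain \<delta> where \<delta>: "\<delta> > 0" "\<And>n. \<delta> \<le> norm (qpoch (csqrt k) q n) * norm (qpoch (- csqrt k) q n)
                    * norm (qpoch (q * k) q n) * norm (qpoch (q * a) q n)"
    by blast
  define E where "E x = exp (norm x / (1 - norm q))" for x :: complex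
  have E: "norm (qpoch x q n) \<le> E x" for x n
    unfolding E_def by (rule norm_qpoch_le[OF q])
  have E_nonneg: "0 \<le> E x" for x
    unfolding E_def by simp
  have "norm (f_coeff a k q (Suc n))
          \<le> E (q * csqrt k) * E (- q * csqrt k) * E k * E (k / a) / (\<delta> * (1 - norm q))" for n
  proof -
    have "\<delta> * (1 - norm q) \<le> norm (qpoch (csqrt k) q (Suc n)) * norm (qpoch (- csqrt k) q (Suc n))
                    * norm (qpoch (q * k) q (Suc n)) * norm (qpoch (q * a) q (Suc n)) * norm (1 - q ^ Suc n)"
      using \<delta> q norm_one_minus_power_ge[OF q] by (intro mult_mono) auto
    moreover have "norm (qpoch (q * csqrt k) q (Suc n)) * norm (qpoch (- q * csqrt k) q (Suc n))
          * norm (qpoch k q (Suc n)) * norm (qpoch (k / a) q (Suc n))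
          \<le> E (q * csqrt k) * E (- q * csqrt k) * E k * E (k / a)"
      by (intro mult_mono E E_nonneg mult_nonneg_nonneg norm_ge_zero)
    ultimately show ?thesis
      unfolding f_coeff_def norm_divide norm_mult using \<delta> q
      by (intro frac_le) (auto intro!: mult_nonneg_nonneg E_nonneg)
  qed
  then show ?thesis
    by blast
qed

text \<open>The very-well-poised factors telescope: with \<open>r = \<surd>k\<close>,
  \<open>(qr;q)\<^sub>n/(r;q)\<^sub>n = (1 - rq\<^sup>n)/(1 - r)\<close> and \<open>(k;q)\<^sub>n/(qk;q)\<^sub>n = (1 - k)/(1 - kq\<^sup>n)\<close>.\<close>
lemma f_coeff_eq:
  assumes "coeff_denoms_nonzero a k q"
  shows "f_coeff a k q n = (1 - k * (q ^ n)\<^sup>2) / (1 - k * q ^ n) * qpoch (k / a) q n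
           / (qpoch (q * a) q n * (1 - q ^ n))"
proof -
  define r where "r = csqrt k"
  have k: "k = r\<^sup>2"
    by (simp add: r_def)
  have nz: "\<forall>n. qpoch r q n \<noteq> 0" "\<forall>n. qpoch (- r) q n \<noteq> 0" "\<forall>n. qpoch (q * k) q n \<noteq> 0"
    using assms unfolding coeff_denoms_nonzero_def r_def by auto
  have r: "1 - r \<noteq> 0" "1 + r \<noteq> 0"
    using qpoch_factor_nonzero[OF nz(1), of 0] qpoch_factor_nonzero[OF nz(2), of 0] by auto
  have k1: "1 - k = (1 - r) * (1 + r)"
    by (simp add: k algebra_simps power2_eq_square)
  have kn: "1 - k * q ^ n \<noteq> 0"
    using r qpoch_factor_nonzero[OF nz(3), of "n - 1"]
    by (cases n) (simp_all add: k1 mult_ac)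
  have ratio_r: "qpoch (q * r) q n / qpoch r q n = (1 - r * q ^ n) / (1 - r)"
    using qpoch_shift[of r q n] nz(1) r by (simp add: frac_eq_eq mult.commute)
  have ratio_minus_r: "qpoch (- q * r) q n / qpoch (- r) q n = (1 + r * q ^ n) / (1 + r)"
    using qpoch_shift[of "- r" q n] nz(2) r by (simp add: frac_eq_eq mult.commute)
  have ratio_k: "qpoch k q n / qpoch (q * k) q n = (1 - k) / (1 - k * q ^ n)"
    using qpoch_shift[of k q n] nz(3) kn by (simp add: frac_eq_eq mult.commute)
  have "f_coeff a k q n = qpoch (q * r) q n / qpoch r q n * (qpoch (- q * r) q n / qpoch (- r) q n)
          * (qpoch k q n / qpoch (q * k) q n) * qpoch (k / a) q n / (qpoch (q * a) q n * (1 - q ^ n))"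
    by (simp add: f_coeff_def r_def)
  also have "\<dots> = (1 - r * q ^ n) * (1 + r * q ^ n) / ((1 - r) * (1 + r)) * ((1 - k) / (1 - k * q ^ n))
          * qpoch (k / a) q n / (qpoch (q * a) q n * (1 - q ^ n))"
    unfolding ratio_r ratio_minus_r ratio_k by simp
  also have "(1 - r * q ^ n) * (1 + r * q ^ n) = 1 - k * (q ^ n)\<^sup>2"
    by (simp add: k algebra_simps power2_eq_square)
  finally show ?thesis
    using r by (simp add: k1)
qed

text \<open>The series \<open>f(a,k,w,q) - f(a,k,w/q,q)\<close> telescopes along this sequence.\<close>
definition contiguity_term :: "complex \<Rightarrow> complex \<Rightarrow> complex \<Rightarrow> complex \<Rightarrow> nat \<Rightarrow> complex" where
  "contiguity_term a k w q m =
     qpoch w q m * qpoch (k / a) q (Suc m) * (q * a / w) ^ Suc m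
     / ((1 - q * a / w) * qpoch (q * k / w) q (Suc m) * qpoch (q * a) q m)"

lemma fterm_divide_q:
  assumes q: "q \<noteq> 0" and nz_K: "1 - q * k / w \<noteq> 0" and nz_Kx: "1 - q * k / w * q ^ Suc m \<noteq> 0"
  shows "fterm a k (w / q) q (Suc m)
    = f_coeff a k q (Suc m) * qpoch w q m * (q * a / w) ^ Suc m / qpoch (q * k / w) q (Suc m)
      * ((1 - w / q) * q ^ Suc m * (1 - q * k / w) / (1 - q * k / w * q ^ Suc m))"
proof -
  have "qpoch (q * k / w) q (Suc (Suc m)) = (1 - q * k / w) * qpoch (q * k / (w / q)) q (Suc m)"
    using qpoch_Suc_left[of "q * k / w" q "Suc m"] q by (simp add: field_simps)
  then have K: "qpoch (q * k / (w / q)) q (Suc m)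
               = qpoch (q * k / w) q (Suc m) * (1 - q * k / w * q ^ Suc m) / (1 - q * k / w)"
    using nz_K by (simp add: qpoch_Suc field_simps)
  have W: "qpoch (w / q) q (Suc m) = (1 - w / q) * qpoch w q m"
    using qpoch_Suc_left[of "w / q" q m] q by simp
  have X: "(q * a / (w / q)) ^ Suc m = q ^ Suc m * (q * a / w) ^ Suc m"
  proof -
    have "q * a / (w / q) = q * (q * a / w)"
      using q by simp
    then show ?thesis
      by (simp only: power_mult_distrib)
  qed
  show ?thesis
    unfolding fterm_eq_f_coeff K W X using nz_K nz_Kx by (simp add: field_simps)
qed

lemma fterm_contiguity_diff:
  assumes q: "q \<noteq> 0" and w: "w \<noteq> 0" and nz: "coeff_denoms_nonzero a k q"
    and nzw: "\<forall>n. qpoch (q * k / w) q n \<noteq> 0"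
  shows "fterm a k w q (Suc m) - fterm a k (w / q) q (Suc m) =
    (1 - k * (q ^ Suc m)\<^sup>2) * qpoch w q m * qpoch (k / a) q (Suc m) * (q * a / w) ^ Suc m
      / (qpoch (q * k / w) q (Suc (Suc m)) * qpoch (q * a) q (Suc m))"
proof -
  define x where "x = q ^ m"
  define F where "F = f_coeff a k q (Suc m) * qpoch w q m * (q * a / w) ^ Suc m
                        / qpoch (q * k / w) q (Suc m)"
  have qx: "q ^ Suc m = q * x"
    by (simp add: x_def)
  have nz_qx: "1 - q * x \<noteq> 0" "1 - k * (q * x) \<noteq> 0" "1 - q * k / w * (q * x) \<noteq> 0"
    using nz qpoch_factor_nonzero[of "q * k" q m] qpoch_factor_nonzero[OF nzw, of "Suc m"]
    unfolding coeff_denoms_nonzero_def qx[symmetric] by (auto simp: mult_ac)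
  have nz_K: "1 - q * k / w \<noteq> 0"
    using qpoch_factor_nonzero[OF nzw, of 0] by simp
  have term_w: "fterm a k w q (Suc m) = F * (1 - w * x)"
    by (simp add: fterm_eq_f_coeff F_def x_def qpoch_Suc mult_ac)
  have term_wq: "fterm a k (w / q) q (Suc m)
      = F * ((1 - w / q) * (q * x) * (1 - q * k / w) / (1 - q * k / w * (q * x)))"
    unfolding F_def qx[symmetric] by (rule fterm_divide_q[OF q nz_K nz_qx(3)[folded qx]])
  have "(1 - w * x) * (1 - q * k / w * (q * x)) - (1 - w / q) * (q * x) * (1 - q * k / w)
          = (1 - q * x) * (1 - k * (q * x))"
    using q w by (simp add: field_simps)
  then have bracket: "(1 - w * x) - (1 - w / q) * (q * x) * (1 - q * k / w) / (1 - q * k / w * (q * x))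
          = (1 - q * x) * (1 - k * (q * x)) / (1 - q * k / w * (q * x))"
    using q w nz_qx by (simp add: field_simps)
  have coeff: "f_coeff a k q (Suc m) * ((1 - q * x) * (1 - k * (q * x)))
        = (1 - k * (q * x)\<^sup>2) * qpoch (k / a) q (Suc m) / qpoch (q * a) q (Suc m)"
    using nz_qx by (simp add: f_coeff_eq[OF nz] x_def)
  have "fterm a k w q (Suc m) - fterm a k (w / q) q (Suc m)
          = F * ((1 - q * x) * (1 - k * (q * x)) / (1 - q * k / w * (q * x)))"
    unfolding term_w term_wq bracket[symmetric] by (simp add: right_diff_distrib)
  also have "\<dots> = f_coeff a k q (Suc m) * ((1 - q * x) * (1 - k * (q * x))) * qpoch w q m
      * (q * a / w) ^ Suc m / (qpoch (q * k / w) q (Suc m) * (1 - q * k / w * (q * x)))"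
    by (simp add: F_def mult_ac)
  finally show ?thesis
    unfolding coeff by (simp add: qpoch_Suc x_def mult_ac)
qed

lemma contiguity_term_diff:
  assumes w: "w \<noteq> 0" and nz: "coeff_denoms_nonzero a k q"
    and nzw: "\<forall>n. qpoch (q * k / w) q n \<noteq> 0" and nz_qa: "1 - q * a / w \<noteq> 0"
  shows "contiguity_term a k w q m - contiguity_term a k w q (Suc m) =
    (1 - k * (q ^ Suc m)\<^sup>2) * qpoch w q m * qpoch (k / a) q (Suc m) * (q * a / w) ^ Suc m
      / (qpoch (q * k / w) q (Suc (Suc m)) * qpoch (q * a) q (Suc m))"
proof -
  define x where "x = q ^ m"
  define G where "G = qpoch w q m * qpoch (k / a) q (Suc m) * (q * a / w) ^ Suc m
                        / (qpoch (q * k / w) q (Suc m) * qpoch (q * a) q m)"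
  define u where "u = 1 - q * a / w"
  define v where "v = (1 - q * k / w * (q * x)) * (1 - q * a * x)"
  define s where "s = 1 - k * (q * x)\<^sup>2"
  define t where "t = (1 - w * x) * (1 - k / a * (q * x)) * (q * a / w)"
  have a: "a \<noteq> 0"
    using nz by (simp add: coeff_denoms_nonzero_def)
  have "v \<noteq> 0"
    using nz qpoch_factor_nonzero[OF nzw, of "Suc m"] qpoch_factor_nonzero[of "q * a" q m]
    unfolding coeff_denoms_nonzero_def v_def x_def by (auto simp: mult_ac)
  have "u \<noteq> 0"
    using nz_qa by (simp add: u_def)
  have "v - t = u * s"
    using a w unfolding u_def v_def s_def t_def by (simp add: field_simps) algebra
  have "G / u - G * t / (u * v) = G * (v - t) / (u * v)"
    using \<open>u \<noteq> 0\<close> \<open>v \<noteq> 0\<close> by (simp add: field_simps)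
  also have "\<dots> = G * s / v"
    using \<open>u \<noteq> 0\<close> unfolding \<open>v - t = u * s\<close> by simp
  finally have "G / u - G * t / (u * v) = G * s / v" .
  moreover have "contiguity_term a k w q m = G / u"
    by (simp add: contiguity_term_def G_def u_def mult_ac)
  moreover have "contiguity_term a k w q (Suc m) = G * t / (u * v)"
    by (simp add: contiguity_term_def G_def u_def v_def t_def x_def qpoch_Suc mult_ac)
  ultimately show ?thesis
    by (simp add: G_def v_def s_def x_def qpoch_Suc mult_ac)
qed

lemma f_contiguity_telescoping:
  assumes q: "q \<noteq> 0" and w: "w \<noteq> 0" and nz: "coeff_denoms_nonzero a k q"
    and nzw: "\<forall>n. qpoch (q * k / w) q n \<noteq> 0" and nz_qa: "1 - q * a / w \<noteq> 0"
    and summable_w: "summable (\<lambda>n. fterm a k w q (Suc n))"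
    and summable_wq: "summable (\<lambda>n. fterm a k (w / q) q (Suc n))"
    and tail: "contiguity_term a k w q \<longlonglongrightarrow> 0"
  shows "f a k w q - f a k (w / q) q = q * (a - k) * w / ((w - q * a) * (w - q * k))"
proof -
  have "(\<lambda>m. fterm a k w q (Suc m) - fterm a k (w / q) q (Suc m)) sums (contiguity_term a k w q 0)"
    using telescope_sums'[OF tail]
    by (simp add: fterm_contiguity_diff[OF q w nz nzw] contiguity_term_diff[OF w nz nzw nz_qa])
  moreover have "(\<lambda>m. fterm a k w q (Suc m) - fterm a k (w / q) q (Suc m)) sums (f a k w q - f a k (w / q) q)"
    unfolding f_def by (intro sums_diff summable_sums summable_w summable_wq)
  ultimately have "f a k w q - f a k (w / q) q = contiguity_term a k w q 0"
    using sums_unique2 by blast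
  also have "\<dots> = (1 - k / a) * (q * a / w) / ((1 - q * a / w) * (1 - q * k / w))"
    by (simp add: contiguity_term_def qpoch_def)
  also have "\<dots> = q * (a - k) * w / ((w - q * a) * (w - q * k))"
  proof -
    have "a \<noteq> 0"
      using nz by (simp add: coeff_denoms_nonzero_def)
    moreover have "w - q * a \<noteq> 0" "w - q * k \<noteq> 0"
      using nz_qa qpoch_factor_nonzero[OF nzw, of 0] w by (auto simp: field_simps)
    ultimately show ?thesis
      using w by (simp add: divide_simps)
  qed
  finally show ?thesis .
qed

lemma norm_fterm_le:
  assumes q: "norm q < 1" and z: "z \<noteq> 0" and \<rho>: "0 < \<rho>" "1 / norm z \<le> \<rho>"
    and C: "norm (f_coeff a k q n) \<le> C" and \<delta>: "0 < \<delta>" "\<delta> \<le> norm (qpoch (q * k / z) q n)"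
  shows "norm (fterm a k z q n) \<le> C * exp (1 / (\<rho> * (1 - norm q))) / \<delta> * (norm (q * a) * \<rho>) ^ n"
proof -
  have "0 \<le> C"
    using C norm_ge_zero order.trans by blast
  have "norm (fterm a k z q n)
          = norm (f_coeff a k q n) * norm (qpoch z q n * (q * a / z) ^ n) / norm (qpoch (q * k / z) q n)"
    by (simp add: fterm_eq_f_coeff norm_mult norm_divide)
  also have "\<dots> \<le> C * ((norm (q * a) * \<rho>) ^ n * exp (1 / (\<rho> * (1 - norm q)))) / \<delta>"
    using C \<delta> \<open>0 \<le> C\<close> \<rho>
    by (intro frac_le mult_mono norm_qpoch_mult_power_le[OF q z \<rho>]) (auto intro!: mult_nonneg_nonneg)
  finally show ?thesis
    by (simp add: mult_ac)
qed

lemma fterm_summable: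
  assumes q: "norm q < 1" and nz: "coeff_denoms_nonzero a k q" and w: "w \<noteq> 0"
    and lt: "norm (q * a) < norm w" and nzw: "\<forall>n. qpoch (q * k / w) q n \<noteq> 0"
  shows "summable (\<lambda>n. fterm a k w q (Suc n))"
proof -
  obtain C where C: "\<And>n. norm (f_coeff a k q (Suc n)) \<le> C"
    using f_coeff_bounded[OF q nz] by blast
  obtain \<delta> where \<delta>: "0 < \<delta>" "\<And>n. \<delta> \<le> norm (qpoch (q * k / w) q n)"
    using qpoch_bounded_below[OF q nzw] by blast
  define r where "r = norm (q * a) * (1 / norm w)"
  have r: "0 \<le> r" "r < 1"
    using lt w by (simp_all add: r_def)
  have bound: "norm (fterm a k w q (Suc n)) \<le> C * exp (1 / (1 / norm w * (1 - norm q))) / \<delta> * r ^ Suc n" for n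
    unfolding r_def using w by (intro norm_fterm_le[OF q w _ _ C \<delta>]) auto
  have "summable (\<lambda>n. C * exp (1 / (1 / norm w * (1 - norm q))) / \<delta> * r ^ Suc n)"
    using r by (intro summable_mult) (simp add: summable_geometric)
  then show ?thesis
    by (rule summable_comparison_test'[where N = 0]) (use bound in auto)
qed

lemma contiguity_term_tendsto_0:
  assumes q: "norm q < 1" and nz: "coeff_denoms_nonzero a k q" and w: "w \<noteq> 0"
    and lt: "norm (q * a) < norm w" and nzw: "\<forall>n. qpoch (q * k / w) q n \<noteq> 0"
  shows "contiguity_term a k w q \<longlonglongrightarrow> 0"
proof -
  obtain \<delta> where \<delta>: "0 < \<delta>" "\<And>n. \<delta> \<le> norm (qpoch (q * k / w) q n)"
    using qpoch_bounded_below[OF q nzw] by blast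
  have "\<forall>n. qpoch (q * a) q n \<noteq> 0"
    using nz by (simp add: coeff_denoms_nonzero_def)
  then obtain \<delta>' where \<delta>': "0 < \<delta>'" "\<And>n. \<delta>' \<le> norm (qpoch (q * a) q n)"
    using qpoch_bounded_below[OF q] by blast
  define x where "x = q * a / w"
  have "norm x < 1"
    using lt w by (simp add: x_def norm_divide)
  then have "0 < norm (1 - x)"
    by auto
  define E where "E = exp (1 / (1 / norm w * (1 - norm q)))"
  define B where "B = E * exp (norm (k / a) / (1 - norm q)) * norm x / (norm (1 - x) * \<delta> * \<delta>')"
  define r where "r = norm (q * a) * (1 / norm w)"
  have r: "0 \<le> r" "r < 1"
    using lt w by (simp_all add: r_def)
  have bound: "norm (contiguity_term a k w q m) \<le> r ^ m * B" for m
  proof -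
    have "norm (contiguity_term a k w q m)
            = norm (qpoch w q m * (q * a / w) ^ m) * norm (qpoch (k / a) q (Suc m)) * norm x
              / (norm (1 - x) * norm (qpoch (q * k / w) q (Suc m)) * norm (qpoch (q * a) q m))"
      by (simp add: contiguity_term_def x_def norm_mult norm_divide norm_power mult_ac)
    also have "\<dots> \<le> r ^ m * E * exp (norm (k / a) / (1 - norm q)) * norm x
                    / (norm (1 - x) * \<delta> * \<delta>')"
      unfolding r_def E_def using \<delta> \<delta>' \<open>0 < norm (1 - x)\<close> q w
      by (intro frac_le mult_mono mult_pos_pos norm_qpoch_le norm_qpoch_mult_power_le
            mult_nonneg_nonneg order.refl) auto
    finally show ?thesis
      by (simp add: B_def mult_ac)
  qed
  have "(\<lambda>m. r ^ m * B) \<longlonglongrightarrow> 0"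
    using r by (intro tendsto_mult_left_zero LIMSEQ_power_zero) auto
  then show ?thesis
    by (rule Lim_null_comparison[rotated]) (intro always_eventually allI bound)
qed

lemma f_contiguity:
  assumes q: "norm q < 1" "q \<noteq> 0" and nz: "coeff_denoms_nonzero a k q" and w: "w \<noteq> 0"
    and lt: "norm (q * a) < norm w" and nzw: "\<forall>n. qpoch (q * k / w) q n \<noteq> 0"
  shows "f a k w q - f a k (w / q) q = q * (a - k) * w / ((w - q * a) * (w - q * k))"
proof (rule f_contiguity_telescoping[OF q(2) w nz nzw])
  have "norm w * norm q \<le> norm w"
    using q by (intro mult_right_le_one_le) auto
  then have "norm w \<le> norm (w / q)"
    using q by (simp add: norm_divide le_divide_eq)
  then have lt': "norm (q * a) < norm (w / q)"
    using lt by simp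
  have nzw': "\<forall>n. qpoch (q * k / (w / q)) q n \<noteq> 0"
    using qpoch_shift_nonzero[OF nzw, of 1] q w by (simp add: field_simps)
  show "1 - q * a / w \<noteq> 0"
    using lt w by (auto simp: field_simps)
  show "summable (\<lambda>n. fterm a k w q (Suc n))"
    by (rule fterm_summable[OF q(1) nz w lt nzw])
  show "summable (\<lambda>n. fterm a k (w / q) q (Suc n))"
    using q w by (intro fterm_summable[OF q(1) nz _ lt' nzw']) auto
  show "contiguity_term a k w q \<longlonglongrightarrow> 0"
    by (rule contiguity_term_tendsto_0[OF q(1) nz w lt nzw])
qed

lemma fterm_eq_0:
  assumes "z * q ^ j = 1" and "j < n"
  shows "fterm a k z q n = 0"
  using qpoch_eq_0I[OF assms(2,1)] by (simp add: fterm_eq_f_coeff)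

text \<open>For \<open>w = q\<^sup>-\<^sup>j\<close> both series terminate, so the contiguity relation needs no growth condition.\<close>
lemma f_contiguity_terminating:
  assumes q: "q \<noteq> 0" and nz: "coeff_denoms_nonzero a k q" and w: "w * q ^ j = 1"
  shows "f a k w q - f a k (w / q) q = q * (a - k) * w / ((w - q * a) * (w - q * k))"
proof (rule f_contiguity_telescoping[OF q _ nz])
  have w_eq: "w = 1 / q ^ j"
    using w q by (simp add: field_simps)
  show "w \<noteq> 0"
    using w by auto
  show "\<forall>n. qpoch (q * k / w) q n \<noteq> 0"
    using qpoch_shift_nonzero[of "q * k" q j] nz by (simp add: w_eq coeff_denoms_nonzero_def)
  show "1 - q * a / w \<noteq> 0"
    using qpoch_factor_nonzero[of "q * a" q j] nz by (simp add: w_eq coeff_denoms_nonzero_def)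
  have wq: "w / q * q ^ Suc j = 1"
    using w q by (simp add: field_simps)
  show "summable (\<lambda>n. fterm a k w q (Suc n))"
    by (rule summable_finite[of "{..<j}"]) (auto intro: fterm_eq_0[OF w])
  show "summable (\<lambda>n. fterm a k (w / q) q (Suc n))"
    by (rule summable_finite[of "{..<Suc j}"]) (auto intro: fterm_eq_0[OF wq])
  have "eventually (\<lambda>m. contiguity_term a k w q m = 0) sequentially"
    unfolding eventually_sequentially
    by (intro exI[of _ "Suc j"]) (auto simp: contiguity_term_def qpoch_eq_0I[OF _ w])
  then show "contiguity_term a k w q \<longlonglongrightarrow> 0"
    by (rule tendsto_eventually)
qed

lemma f_at_1: "f a k 1 q = 0"
  using fterm_eq_0[of 1 q 0] by (simp add: f_def)

lemma f_q_0: "f a k z 0 = 0"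
  by (simp add: f_def fterm_def)

definition f_limit :: "complex \<Rightarrow> complex \<Rightarrow> complex \<Rightarrow> complex" where
  "f_limit a k q = (\<Sum>n. f_coeff a k q (Suc n) * (q * a) ^ Suc n * (\<Prod>j<Suc n. - (q ^ j)))"

lemma norm_fterm_divide_power_le:
  assumes q: "norm q < 1" "q \<noteq> 0" and c: "c \<noteq> 0" and C: "norm (f_coeff a k q n) \<le> C"
    and small: "norm (q * k) * (norm q ^ m / norm c) \<le> (1 - norm q) / 2"
  shows "norm (fterm a k (c / q ^ m) q n)
           \<le> 2 * C * exp (norm c / (1 - norm q)) * (norm (q * a) / norm c) ^ n"
proof -
  have "norm (fterm a k (c / q ^ m) q n)
          \<le> C * exp (1 / (1 / norm c * (1 - norm q))) / (1 / 2) * (norm (q * a) * (1 / norm c)) ^ n"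
  proof (rule norm_fterm_le[OF q(1) _ _ _ C])
    show "1 / norm (c / q ^ m) \<le> 1 / norm c"
      using q c by (simp add: norm_divide norm_power power_le_one divide_right_mono)
    show "1 / 2 \<le> norm (qpoch (q * k / (c / q ^ m)) q n)"
      using small q by (intro norm_qpoch_ge_half) (auto simp: norm_mult norm_divide norm_power)
  qed (use q c in auto)
  then show ?thesis
    by (simp add: mult_ac)
qed

lemma f_tendsto_f_limit:
  assumes q: "norm q < 1" "q \<noteq> 0" and nz: "coeff_denoms_nonzero a k q" and c: "c \<noteq> 0"
    and lt: "norm (q * a) < norm c"
  shows "(\<lambda>m. f a k (c / q ^ m) q) \<longlonglongrightarrow> f_limit a k q"
proof -
  obtain C where C: "\<And>n. norm (f_coeff a k q (Suc n)) \<le> C"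
    using f_coeff_bounded[OF q(1) nz] by blast
  define u where "u m = q ^ m / c" for m
  define B where "B n = 2 * C * exp (norm c / (1 - norm q)) * (norm (q * a) / norm c) ^ Suc n" for n
  have fterm_eq: "fterm a k (c / q ^ m) q n
      = f_coeff a k q n * ((q * a) ^ n * (\<Prod>j<n. u m - q ^ j)) / qpoch (q * k * u m) q n" for m n
    using qpoch_mult_power[of "c / q ^ m" q n "q * a"] c q by (simp add: fterm_eq_f_coeff u_def)
  have "u \<longlonglongrightarrow> 0"
    unfolding u_def by (intro tendsto_divide_zero LIMSEQ_power_zero q)
  then have pointwise: "(\<lambda>m. fterm a k (c / q ^ m) q (Suc n))
      \<longlonglongrightarrow> f_coeff a k q (Suc n) * (q * a) ^ Suc n * (\<Prod>j<Suc n. - (q ^ j))" for n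
    unfolding fterm_eq qpoch_def by (intro tendsto_eq_intros) auto
  have "(\<lambda>m. norm (q * k) * (norm q ^ m / norm c)) \<longlonglongrightarrow> 0"
    by (intro tendsto_mult_right_zero tendsto_divide_zero LIMSEQ_power_zero) (use q in simp)
  then have "eventually (\<lambda>m. norm (q * k) * (norm q ^ m / norm c) < (1 - norm q) / 2) sequentially"
    by (rule order_tendstoD(2)) (use q in simp)
  then obtain M where M: "\<And>m. m \<ge> M \<Longrightarrow> norm (q * k) * (norm q ^ m / norm c) < (1 - norm q) / 2"
    by (auto simp: eventually_sequentially)
  have "norm (fterm a k (c / q ^ m) q (Suc n)) \<le> B n" if "m \<ge> M" for m n
    unfolding B_def using M[OF that] by (intro norm_fterm_divide_power_le[OF q c C]) simp
  then have "eventually (\<lambda>(n, m). norm (fterm a k (c / q ^ m) q (Suc n)) \<le> B n)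
      (at_top \<times>\<^sub>F sequentially)"
    unfolding eventually_prod_sequentially by auto
  moreover have "summable B"
    using lt c unfolding B_def by (intro summable_mult summable_geometric_iff[THEN iffD2]) simp
  ultimately show ?thesis
    using tannerys_theorem[OF pointwise] unfolding f_def f_limit_def by auto
qed

lemma contiguity_rhs_sum:
  fixes a k q w :: complex
  assumes "w - q * a \<noteq> 0" "w + q * a \<noteq> 0" "w - q * k \<noteq> 0" "w + q * k \<noteq> 0"
  shows "q * (a - k) * w / ((w - q * a) * (w - q * k))
           + q * (- a - - k) * w / ((w - q * - a) * (w - q * - k))
         = 2 * (q\<^sup>2 * (a\<^sup>2 - k\<^sup>2) * w\<^sup>2 / ((w\<^sup>2 - q\<^sup>2 * a\<^sup>2) * (w\<^sup>2 - q\<^sup>2 * k\<^sup>2)))"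
proof -
  have "w\<^sup>2 - q\<^sup>2 * a\<^sup>2 = (w - q * a) * (w + q * a)" "w\<^sup>2 - q\<^sup>2 * k\<^sup>2 = (w - q * k) * (w + q * k)"
    by algebra+
  then show ?thesis
    using assms by (simp add: divide_simps) (simp add: algebra_simps power2_eq_square)
qed

definition sym_defect :: "complex \<Rightarrow> complex \<Rightarrow> complex \<Rightarrow> complex \<Rightarrow> complex" where
  "sym_defect a k q w = f a k w q + f (- a) (- k) w q - 2 * f (a\<^sup>2) (k\<^sup>2) (w\<^sup>2) (q\<^sup>2)"

lemma sym_defect_shift_if_contiguous:
  assumes "f a k w q - f a k (w / q) q = q * (a - k) * w / ((w - q * a) * (w - q * k))"
    and "f (- a) (- k) w q - f (- a) (- k) (w / q) q
           = q * (- a - - k) * w / ((w - q * - a) * (w - q * - k))"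
    and "f (a\<^sup>2) (k\<^sup>2) (w\<^sup>2) (q\<^sup>2) - f (a\<^sup>2) (k\<^sup>2) (w\<^sup>2 / q\<^sup>2) (q\<^sup>2)
           = q\<^sup>2 * (a\<^sup>2 - k\<^sup>2) * w\<^sup>2 / ((w\<^sup>2 - q\<^sup>2 * a\<^sup>2) * (w\<^sup>2 - q\<^sup>2 * k\<^sup>2))"
    and "w - q * a \<noteq> 0" "w + q * a \<noteq> 0" "w - q * k \<noteq> 0" "w + q * k \<noteq> 0"
  shows "sym_defect a k q (w / q) = sym_defect a k q w"
  using assms contiguity_rhs_sum[OF assms(4-7)]
  by (simp add: sym_defect_def power_divide algebra_simps)

context
  fixes a k q :: complex
  assumes q: "norm q < 1" "q \<noteq> 0"
    and nz: "coeff_denoms_nonzero a k q" "coeff_denoms_nonzero (- a) (- k) q"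
      "coeff_denoms_nonzero (a\<^sup>2) (k\<^sup>2) (q\<^sup>2)"
begin

lemma sym_defect_shift:
  assumes w: "w \<noteq> 0" and lt: "norm (q * a) < norm w"
    and nzw: "\<forall>n. qpoch (q * k / w) q n \<noteq> 0" "\<forall>n. qpoch (q * - k / w) q n \<noteq> 0"
      "\<forall>n. qpoch (q\<^sup>2 * k\<^sup>2 / w\<^sup>2) (q\<^sup>2) n \<noteq> 0"
  shows "sym_defect a k q (w / q) = sym_defect a k q w"
proof (rule sym_defect_shift_if_contiguous)
  have q2: "norm (q\<^sup>2) < 1" "q\<^sup>2 \<noteq> 0"
    using q by (simp_all add: norm_power power_less_one_iff)
  have lt2: "norm (q\<^sup>2 * a\<^sup>2) < norm (w\<^sup>2)"
    using lt by (simp add: norm_mult norm_power power_mult_distrib[symmetric] power_strict_mono)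
  show "f a k w q - f a k (w / q) q = q * (a - k) * w / ((w - q * a) * (w - q * k))"
    by (rule f_contiguity[OF q nz(1) w lt nzw(1)])
  show "f (- a) (- k) w q - f (- a) (- k) (w / q) q
          = q * (- a - - k) * w / ((w - q * - a) * (w - q * - k))"
    using lt by (intro f_contiguity[OF q nz(2) w _ nzw(2)]) simp
  show "f (a\<^sup>2) (k\<^sup>2) (w\<^sup>2) (q\<^sup>2) - f (a\<^sup>2) (k\<^sup>2) (w\<^sup>2 / q\<^sup>2) (q\<^sup>2)
          = q\<^sup>2 * (a\<^sup>2 - k\<^sup>2) * w\<^sup>2 / ((w\<^sup>2 - q\<^sup>2 * a\<^sup>2) * (w\<^sup>2 - q\<^sup>2 * k\<^sup>2))"
    using w by (intro f_contiguity[OF q2 nz(3) _ lt2 nzw(3)]) simp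
  show "w - q * a \<noteq> 0" "w + q * a \<noteq> 0"
    using lt by (auto, metis add_eq_0_iff norm_minus_cancel order_less_irrefl)
  show "w - q * k \<noteq> 0" "w + q * k \<noteq> 0"
    using qpoch_factor_nonzero[OF nzw(1), of 0] qpoch_factor_nonzero[OF nzw(2), of 0] w
    by (auto simp: field_simps)
qed

lemma sym_defect_divide_power:
  assumes z: "z \<noteq> 0" and lt: "norm (q * a) < norm z"
    and nzz: "\<forall>n. qpoch (q * k / z) q n \<noteq> 0" "\<forall>n. qpoch (q * - k / z) q n \<noteq> 0"
      "\<forall>n. qpoch (q\<^sup>2 * k\<^sup>2 / z\<^sup>2) (q\<^sup>2) n \<noteq> 0"
  shows "sym_defect a k q (z / q ^ j) = sym_defect a k q z"
proof (induction j)
  case (Suc j)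
  define w where "w = z / q ^ j"
  have "w \<noteq> 0"
    using z q by (simp add: w_def)
  have "norm z \<le> norm w"
    using q by (simp add: w_def norm_divide norm_power le_divide_eq power_le_one mult_right_le_one_le)
  have shift: "q * c / w = q * c / z * q ^ j" "q\<^sup>2 * c\<^sup>2 / w\<^sup>2 = q\<^sup>2 * c\<^sup>2 / z\<^sup>2 * (q\<^sup>2) ^ j" for c
    using z q by (simp_all add: w_def field_simps power_divide flip: power_mult_distrib power_mult)
  have "sym_defect a k q (w / q) = sym_defect a k q w"
    using lt \<open>norm z \<le> norm w\<close> \<open>w \<noteq> 0\<close> qpoch_shift_nonzero[OF nzz(1)]
      qpoch_shift_nonzero[OF nzz(2)] qpoch_shift_nonzero[OF nzz(3)]
    by (intro sym_defect_shift) (simp_all add: shift)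
  then show ?case
    using Suc.IH by (simp add: w_def field_simps)
qed simp

lemma sym_defect_shift_terminating:
  assumes w: "w * q ^ j = 1"
  shows "sym_defect a k q (w / q) = sym_defect a k q w"
proof (rule sym_defect_shift_if_contiguous)
  have w_eq: "w = 1 / q ^ j"
    using w q by (simp add: field_simps)
  have "w\<^sup>2 * (q\<^sup>2) ^ j = 1"
    using w by (metis power_mult_distrib power_mult power_one mult.commute)
  then show "f (a\<^sup>2) (k\<^sup>2) (w\<^sup>2) (q\<^sup>2) - f (a\<^sup>2) (k\<^sup>2) (w\<^sup>2 / q\<^sup>2) (q\<^sup>2)
      = q\<^sup>2 * (a\<^sup>2 - k\<^sup>2) * w\<^sup>2 / ((w\<^sup>2 - q\<^sup>2 * a\<^sup>2) * (w\<^sup>2 - q\<^sup>2 * k\<^sup>2))"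
    using q by (intro f_contiguity_terminating[OF _ nz(3)]) simp_all
  show "f a k w q - f a k (w / q) q = q * (a - k) * w / ((w - q * a) * (w - q * k))"
    by (rule f_contiguity_terminating[OF q(2) nz(1) w])
  show "f (- a) (- k) w q - f (- a) (- k) (w / q) q
      = q * (- a - - k) * w / ((w - q * - a) * (w - q * - k))"
    by (rule f_contiguity_terminating[OF q(2) nz(2) w])
  show "w - q * a \<noteq> 0" "w + q * a \<noteq> 0" "w - q * k \<noteq> 0" "w + q * k \<noteq> 0"
    using nz(1,2) q qpoch_factor_nonzero[of "q * a" q j] qpoch_factor_nonzero[of "q * - a" q j]
      qpoch_factor_nonzero[of "q * k" q j] qpoch_factor_nonzero[of "q * - k" q j]
    by (auto simp: w_eq coeff_denoms_nonzero_def field_simps)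
qed

lemma sym_defect_eq_0_terminating:
  assumes "w * q ^ j = 1"
  shows "sym_defect a k q w = 0"
  using assms
proof (induction j arbitrary: w)
  case 0
  then show ?case
    by (simp add: sym_defect_def f_at_1)
next
  case (Suc j)
  then have "sym_defect a k q (w * q) = 0"
    by (intro Suc.IH) (simp add: mult_ac)
  moreover have "sym_defect a k q (w * q / q) = sym_defect a k q (w * q)"
    using Suc.prems by (intro sym_defect_shift_terminating[of _ j]) (simp add: mult_ac)
  ultimately show ?case
    using q by simp
qed

lemma sym_defect_tendsto:
  assumes c: "c \<noteq> 0" and lt: "norm (q * a) < norm c"
  shows "(\<lambda>m. sym_defect a k q (c / q ^ m))
           \<longlonglongrightarrow> f_limit a k q + f_limit (- a) (- k) q - 2 * f_limit (a\<^sup>2) (k\<^sup>2) (q\<^sup>2)"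
proof -
  have q2: "norm (q\<^sup>2) < 1" "q\<^sup>2 \<noteq> 0"
    using q by (simp_all add: norm_power power_less_one_iff)
  have lt2: "norm (q\<^sup>2 * a\<^sup>2) < norm (c\<^sup>2)"
    using lt by (simp add: norm_mult norm_power power_mult_distrib[symmetric] power_strict_mono)
  have "(\<lambda>m. f (a\<^sup>2) (k\<^sup>2) (c\<^sup>2 / (q\<^sup>2) ^ m) (q\<^sup>2)) \<longlonglongrightarrow> f_limit (a\<^sup>2) (k\<^sup>2) (q\<^sup>2)"
    using c by (intro f_tendsto_f_limit[OF q2 nz(3) _ lt2]) simp
  moreover have "c\<^sup>2 / (q\<^sup>2) ^ m = (c / q ^ m)\<^sup>2" for m
    by (simp add: power_divide flip: power_mult) (simp add: mult.commute)
  ultimately show ?thesis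
    unfolding sym_defect_def using lt
    by (intro tendsto_intros f_tendsto_f_limit[OF q nz(1) c] f_tendsto_f_limit[OF q nz(2) c]) simp_all
qed

lemma sym_defect_eq_0:
  assumes z: "z \<noteq> 0" and lt: "norm (q * a) < norm z"
    and nzz: "\<forall>n. qpoch (q * k / z) q n \<noteq> 0" "\<forall>n. qpoch (q * - k / z) q n \<noteq> 0"
      "\<forall>n. qpoch (q\<^sup>2 * k\<^sup>2 / z\<^sup>2) (q\<^sup>2) n \<noteq> 0"
  shows "sym_defect a k q z = 0"
proof -
  define L where "L = f_limit a k q + f_limit (- a) (- k) q - 2 * f_limit (a\<^sup>2) (k\<^sup>2) (q\<^sup>2)"
  have "(\<lambda>m. sym_defect a k q (z / q ^ m)) \<longlonglongrightarrow> L"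
    unfolding L_def by (rule sym_defect_tendsto[OF z lt])
  then have "sym_defect a k q z = L"
    by (simp add: sym_defect_divide_power[OF z lt nzz] LIMSEQ_const_iff)
  have "eventually (\<lambda>j. norm (q * a) * norm q ^ j < 1) sequentially"
    using q by (intro order_tendstoD(2)[OF tendsto_mult_right_zero[OF LIMSEQ_power_zero]]) auto
  then obtain j where j: "norm (q * a) * norm q ^ j < 1"
    by (auto simp: eventually_sequentially)
  have "(\<lambda>m. sym_defect a k q (1 / q ^ j / q ^ m)) \<longlonglongrightarrow> L"
    unfolding L_def using j q by (intro sym_defect_tendsto) (auto simp: norm_divide norm_power field_simps)
  moreover have "sym_defect a k q (1 / q ^ j / q ^ m) = 0" for m
    using q by (intro sym_defect_eq_0_terminating[of _ "j + m"]) (simp add: power_add)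
  ultimately have "L = 0"
    by (simp add: LIMSEQ_const_iff)
  with \<open>sym_defect a k q z = L\<close> show ?thesis
    by simp
qed

end

theorem lemma2p4:
  fixes a k z q :: complex
  assumes "norm q < 1" and "norm (q * a) < norm z"
    and "f_denoms_nonzero a k z q"
    and "f_denoms_nonzero (- a) (- k) z q"
    and "f_denoms_nonzero (a ^ 2) (k ^ 2) (z ^ 2) (q ^ 2)"
  shows "f a k z q + f (- a) (- k) z q = 2 * f (a ^ 2) (k ^ 2) (z ^ 2) (q ^ 2)"
proof (cases "q = 0")
  case True
  then show ?thesis
    by (simp add: f_q_0)
next
  case False
  note nz = assms(3-5)[unfolded f_denoms_nonzero_iff]
  have "sym_defect a k q z = 0"
    using nz by (intro sym_defect_eq_0[OF assms(1) False _ _ _ _ assms(2)]) auto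
  then show ?thesis
    by (simp add: sym_defect_def)
qed

end
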